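(* Let $n\in\mathbb N$, $\delta>0$, and let $d$ be a metric on $\mathbb R^n$ induced by a norm. Let $w_1,\dots,w_N$ be contractions on $(\mathbb R^n,d)$ with contractivity factors $\lambda_i\in[0,1)$, let $\lambda_{max}=\max_i\lambda_i$, and let $A_\infty$ be the attractor of the hyperbolic IFS $\{\mathbb R^n;w_1,\dots,w_N;q_1,\dots,q_N\}$ with constant probabilities $q_i\in(0,1]$, $\sum_iq_i=1$. Let $\{\mathcal D^n(\delta);\tilde w_1,\dots,\tilde w_N;p_1,\dots,p_N\}$ be a DIFS in which $\tilde w_i$ is the $\delta$-roundoff of $w_i$. Then, independently of the values of the probabilities $p_i(\cdot)$ and $q_i$, for every positive recurrent communication class $\mathcal A_k^+$ of the Markov chain associated with the DIFS, the Hausdorff distance (induced by $d$) satisfies $$h(\mathcal A_k^+,A_\infty)\le\theta(1-\lambda_{max})^{-1}.$$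
   Context: For $m\in\mathbb Z^n$, $C_\delta(m)=\prod_{j=1}^n[(m_j-\tfrac12)\delta,(m_j+\tfrac12)\delta)$; $\mathcal D^n(\delta)=\{\delta m:m\in\mathbb Z^n\}\subset\mathbb R^n$. The $\delta$-roundoff of $x\in\mathbb R^n$ is $\tilde x=\delta m$ where $x\in C_\delta(m)$; the $\delta$-roundoff of $w:\mathbb R^n\to\mathbb R^n$ is $\tilde w(\tilde x)=\widetilde{w(\tilde x)}$ on $\mathcal D^n(\delta)$. $\theta:=\tfrac12\operatorname{diam}_d(C_\delta(0))$. The attractor of a hyperbolic IFS is the unique nonempty compact $A_\infty\subset\mathbb R^n$ with $A_\infty=\bigcup_i w_i(A_\infty)$. A DIFS $\{S;\tilde w_1,\dots,\tilde w_N;p_1,\dots,p_N\}$ consists of $S\subset\mathcal D^n(\delta)$, maps $\tilde w_i:S\to S$ and functions $p_i:S\to(0,1]$ with $\sum_ip_i(\tilde x)=1$; its associated Markov chain has transition probabilities $P(\tilde x,\tilde y)=\sum_ip_i(\tilde x)\mathbf 1_{\{\tilde y\}}(\tilde w_i(\tilde x))$. State $\tilde y$ is accessible from $\tilde x$ if $P^k(\tilde x,\tilde y)>0$ for some $k\ge1$; two states communicate if each is accessible from the other; a communication class is a maximal nonempty set of states any two of which (not necessarily distinct) communicate. A state is recurrent if the chain started there returns to it in finitely many steps a.s., and positive recurrent if moreover the expected return time is finite; a positive recurrent communication class is a communication class of positive recurrent states. *)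

theory Defs
  imports "HOL-Analysis.Analysis"
begin

definition is_norm :: "(real^'n \<Rightarrow> real) \<Rightarrow> bool" where
  "is_norm nrm \<longleftrightarrow>
     (\<forall>x. 0 \<le> nrm x) \<and> (\<forall>x. nrm x = 0 \<longleftrightarrow> x = 0) \<and>
     (\<forall>c x. nrm (c *\<^sub>R x) = \<bar>c\<bar> * nrm x) \<and>
     (\<forall>x y. nrm (x + y) \<le> nrm x + nrm y)"

definition grid :: "real \<Rightarrow> (real^'n) set" where
  "grid \<delta> = {x. \<exists>m::int^'n. x = (\<chi> j. \<delta> * of_int (m $ j))}"

definition cell0 :: "real \<Rightarrow> (real^'n) set" where
  "cell0 \<delta> = {x. \<forall>j. - \<delta> / 2 \<le> x $ j \<and> x $ j < \<delta> / 2}"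

text \<open>delta-roundoff: x in C_delta(m) iff m_j = floor(x_j/delta + 1/2).\<close>
definition roundoff :: "real \<Rightarrow> real^'n \<Rightarrow> real^'n" where
  "roundoff \<delta> x = (\<chi> j. \<delta> * of_int \<lfloor>x $ j / \<delta> + 1/2\<rfloor>)"

definition theta :: "(real^'n \<Rightarrow> real) \<Rightarrow> real \<Rightarrow> real" where
  "theta nrm \<delta> = (SUP p \<in> cell0 \<delta> \<times> cell0 \<delta>. nrm (fst p - snd p)) / 2"

definition hausdorff_d :: "(real^'n \<Rightarrow> real) \<Rightarrow> (real^'n) set \<Rightarrow> (real^'n) set \<Rightarrow> ereal" where
  "hausdorff_d nrm A B =
     max (SUP a\<in>A. INF b\<in>B. ereal (nrm (a - b))) (SUP b\<in>B. INF a\<in>A. ereal (nrm (a - b)))"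

fun Pk :: "nat \<Rightarrow> (nat \<Rightarrow> 'a \<Rightarrow> 'a) \<Rightarrow> (nat \<Rightarrow> 'a \<Rightarrow> real) \<Rightarrow> nat \<Rightarrow> 'a \<Rightarrow> 'a \<Rightarrow> real" where
  "Pk N wt p 0 x y = (if x = y then 1 else 0)"
| "Pk N wt p (Suc k) x y = (\<Sum>i<N. p i x * Pk N wt p k (wt i x) y)"

text \<open>First-passage probabilities f^(k)(x,y): probability that the chain started at x
  hits y for the first time (at a time >= 1) at time k.\<close>
fun Fk :: "nat \<Rightarrow> (nat \<Rightarrow> 'a \<Rightarrow> 'a) \<Rightarrow> (nat \<Rightarrow> 'a \<Rightarrow> real) \<Rightarrow> nat \<Rightarrow> 'a \<Rightarrow> 'a \<Rightarrow> real" where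
  "Fk N wt p 0 x y = 0"
| "Fk N wt p (Suc k) x y =
     (\<Sum>i<N. p i x * (if wt i x = y then (if k = 0 then 1 else 0) else Fk N wt p k (wt i x) y))"

definition accessible :: "nat \<Rightarrow> (nat \<Rightarrow> 'a \<Rightarrow> 'a) \<Rightarrow> (nat \<Rightarrow> 'a \<Rightarrow> real) \<Rightarrow> 'a \<Rightarrow> 'a \<Rightarrow> bool" where
  "accessible N wt p x y \<longleftrightarrow> (\<exists>k\<ge>1. Pk N wt p k x y > 0)"

definition communicate :: "nat \<Rightarrow> (nat \<Rightarrow> 'a \<Rightarrow> 'a) \<Rightarrow> (nat \<Rightarrow> 'a \<Rightarrow> real) \<Rightarrow> 'a \<Rightarrow> 'a \<Rightarrow> bool" where
  "communicate N wt p x y \<longleftrightarrow> accessible N wt p x y \<and> accessible N wt p y x"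

definition comm_class :: "'a set \<Rightarrow> nat \<Rightarrow> (nat \<Rightarrow> 'a \<Rightarrow> 'a) \<Rightarrow> (nat \<Rightarrow> 'a \<Rightarrow> real) \<Rightarrow> 'a set \<Rightarrow> bool" where
  "comm_class S N wt p C \<longleftrightarrow> C \<noteq> {} \<and> C \<subseteq> S \<and>
     (\<forall>x\<in>C. \<forall>y\<in>C. communicate N wt p x y) \<and>
     (\<forall>x\<in>C. \<forall>y\<in>S. communicate N wt p x y \<longrightarrow> y \<in> C)"

definition recurrent :: "nat \<Rightarrow> (nat \<Rightarrow> 'a \<Rightarrow> 'a) \<Rightarrow> (nat \<Rightarrow> 'a \<Rightarrow> real) \<Rightarrow> 'a \<Rightarrow> bool" where
  "recurrent N wt p x \<longleftrightarrow> summable (\<lambda>k. Fk N wt p k x x) \<and> (\<Sum>k. Fk N wt p k x x) = 1"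

definition pos_recurrent :: "nat \<Rightarrow> (nat \<Rightarrow> 'a \<Rightarrow> 'a) \<Rightarrow> (nat \<Rightarrow> 'a \<Rightarrow> real) \<Rightarrow> 'a \<Rightarrow> bool" where
  "pos_recurrent N wt p x \<longleftrightarrow> recurrent N wt p x \<and> summable (\<lambda>k. real k * Fk N wt p k x x)"

definition pos_rec_class :: "'a set \<Rightarrow> nat \<Rightarrow> (nat \<Rightarrow> 'a \<Rightarrow> 'a) \<Rightarrow> (nat \<Rightarrow> 'a \<Rightarrow> real) \<Rightarrow> 'a set \<Rightarrow> bool" where
  "pos_rec_class S N wt p C \<longleftrightarrow> comm_class S N wt p C \<and> (\<forall>x\<in>C. pos_recurrent N wt p x)"

end

theory Submission
  imports Defs
begin

(* Let B = theta / (1 - lambda) and let dist(x, S) be the d-distance from x to a set S.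
   Rounding off costs at most theta, so dist(w~_i x, A) <= theta + lambda dist(x, A), i.e. the
   excess dist(., A) - B contracts by lambda along every transition of the chain. A state c of a
   recurrent class returns to itself after k >= 1 steps, so its excess is at most lambda^k times
   itself and hence nonpositive. Conversely, a recurrent class C is closed under the maps w~_i,
   and every point of A is w_i a' with a' in A, so dist(w_i a', C) <= theta + lambda dist(a', C);
   as A is bounded, the supremum M of dist(., C) over A satisfies M <= theta + lambda M. *)

section \<open>The Markov chain of a system of random maps\<close>

locale random_map_chain =
  fixes S :: "'a set" and N :: nat and wt :: "nat \<Rightarrow> 'a \<Rightarrow> 'a" and p :: "nat \<Rightarrow> 'a \<Rightarrow> real"
  assumes maps_into: "\<And>i x. i < N \<Longrightarrow> x \<in> S \<Longrightarrow> wt i x \<in> S"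
    and prob_pos: "\<And>i x. i < N \<Longrightarrow> x \<in> S \<Longrightarrow> 0 < p i x"
    and prob_sum: "\<And>x. x \<in> S \<Longrightarrow> (\<Sum>i<N. p i x) = 1"
begin

lemma prob_le_1: "i < N \<Longrightarrow> x \<in> S \<Longrightarrow> p i x \<le> 1"
  using member_le_sum[of i "{..<N}" "\<lambda>i. p i x"] prob_pos prob_sum by (auto intro: less_imp_le)

lemma Pk_nonneg: "x \<in> S \<Longrightarrow> 0 \<le> Pk N wt p k x y"
  by (induction k arbitrary: x) (auto intro!: sum_nonneg mult_nonneg_nonneg less_imp_le[OF prob_pos] maps_into)

lemma Fk_nonneg: "x \<in> S \<Longrightarrow> 0 \<le> Fk N wt p k x y"
proof (induction k arbitrary: x)
  case (Suc k)
  then show ?case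
    by (auto intro!: sum_nonneg mult_nonneg_nonneg less_imp_le[OF prob_pos] Suc.IH maps_into)
qed simp

lemma Fk_le_Pk: "x \<in> S \<Longrightarrow> Fk N wt p k x y \<le> Pk N wt p k x y"
proof (induction k arbitrary: x)
  case (Suc k)
  have "(if wt i x = y then (if k = 0 then 1 else 0) else Fk N wt p k (wt i x) y)
          \<le> Pk N wt p k (wt i x) y" if "i < N" for i
    using Suc maps_into[OF that] Pk_nonneg[where x = "wt i x" and k = k and y = y] by auto
  then show ?case unfolding Fk.simps Pk.simps
    by (intro sum_mono mult_left_mono) (use Suc.prems prob_pos in \<open>auto intro: less_imp_le\<close>)
qed simp

lemma Pk_Suc_pos_obtain:
  assumes "x \<in> S" "Pk N wt p (Suc m) x y > 0"
  obtains j where "j < N" "Pk N wt p m (wt j x) y > 0"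
proof -
  have "\<exists>j<N. Pk N wt p m (wt j x) y > 0"
  proof (rule ccontr)
    assume "\<not> ?thesis"
    then have "Pk N wt p (Suc m) x y \<le> 0" unfolding Pk.simps
      by (intro sum_nonpos mult_nonneg_nonpos) (use prob_pos assms(1) in \<open>auto intro: less_imp_le\<close>)
    then show False using assms(2) by simp
  qed
  then show thesis using that by blast
qed

lemma Pk_pos_imp_mem: "x \<in> S \<Longrightarrow> Pk N wt p m x y > 0 \<Longrightarrow> y \<in> S"
proof (induction m arbitrary: x)
  case (Suc m)
  then show ?case by (metis Pk_Suc_pos_obtain maps_into)
qed (simp split: if_splits)

lemma accessible_step: "x \<in> S \<Longrightarrow> i < N \<Longrightarrow> accessible N wt p x (wt i x)"
proof -
  assume x: "x \<in> S" and i: "i < N"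
  have "p i x * (if wt i x = wt i x then 1 else 0) \<le> (\<Sum>j<N. p j x * (if wt j x = wt i x then 1 else 0))"
    by (rule member_le_sum) (use x i prob_pos in \<open>auto intro: less_imp_le\<close>)
  then show ?thesis
    unfolding accessible_def using prob_pos[OF i x] by (intro exI[of _ "Suc 0"]) auto
qed

text \<open>Since \<open>Fk 0 = 0\<close>, \<open>hit_prob c n x\<close> is the probability of visiting \<open>c\<close> at one of the
  times \<open>1, \<dots>, n - 1\<close>; \<open>visit_prob\<close> also counts time \<open>0\<close>.\<close>
definition hit_prob :: "'a \<Rightarrow> nat \<Rightarrow> 'a \<Rightarrow> real" where
  "hit_prob c n x = (\<Sum>k<n. Fk N wt p k x c)"

definition visit_prob :: "'a \<Rightarrow> nat \<Rightarrow> 'a \<Rightarrow> real" where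
  "visit_prob c n x = (if x = c then (if n = 0 then 0 else 1) else hit_prob c n x)"

lemma hit_prob_Suc: "hit_prob c (Suc n) x = (\<Sum>i<N. p i x * visit_prob c n (wt i x))"
proof -
  have "hit_prob c (Suc n) x = (\<Sum>k<n. Fk N wt p (Suc k) x c)"
    unfolding hit_prob_def sum.lessThan_Suc_shift by simp
  also have "\<dots> = (\<Sum>i<N. \<Sum>k<n. p i x *
      (if wt i x = c then (if k = 0 then 1 else 0) else Fk N wt p k (wt i x) c))"
    by (simp add: sum.swap[of _ "{..<N}"])
  also have "\<dots> = (\<Sum>i<N. p i x * visit_prob c n (wt i x))"
    by (intro sum.cong refl)
      (auto simp: sum_distrib_left[symmetric] visit_prob_def hit_prob_def lessThan_def)
  finally show ?thesis .
qed

lemma hit_prob_le_1: "x \<in> S \<Longrightarrow> hit_prob c n x \<le> 1"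
proof (induction n arbitrary: x)
  case (Suc n)
  have "visit_prob c n (wt i x) \<le> 1" if "i < N" for i
    using Suc.IH[OF maps_into[OF that Suc.prems]] by (simp add: visit_prob_def)
  then have "hit_prob c (Suc n) x \<le> (\<Sum>i<N. p i x)" unfolding hit_prob_Suc
    by (intro sum_mono mult_left_le) (use Suc.prems prob_pos in \<open>auto intro: less_imp_le\<close>)
  then show ?case using prob_sum[OF Suc.prems] by simp
qed (simp add: hit_prob_def)

definition escapes :: "'a \<Rightarrow> 'a \<Rightarrow> bool" where
  "escapes c x \<longleftrightarrow> (\<exists>e>0. \<forall>n. hit_prob c n x \<le> 1 - e)"

lemma escapes_step:
  assumes x: "x \<in> S" and j: "j < N" "wt j x \<noteq> c" and esc: "escapes c (wt j x)"
  shows "escapes c x"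
proof -
  obtain e where e: "e > 0" "\<And>n. hit_prob c n (wt j x) \<le> 1 - e"
    using esc unfolding escapes_def by blast
  have "e \<le> 1" using e(2)[of 0] by (simp add: hit_prob_def)
  then have pe: "0 < p j x * e" "p j x * e \<le> 1"
    using e(1) prob_pos[OF j(1) x] prob_le_1[OF j(1) x] by (auto intro: mult_le_one)
  have "hit_prob c n x \<le> 1 - p j x * e" for n
  proof (cases n)
    case 0
    then show ?thesis using pe by (simp add: hit_prob_def)
  next
    case (Suc n')
    have "p i x * visit_prob c n' (wt i x) \<le> p i x - (if i = j then p i x * e else 0)"
      if i: "i < N" for i
    proof -
      have "p i x * visit_prob c n' (wt i x) \<le> p i x * (1 - (if i = j then e else 0))"
        using e(2) j(2) hit_prob_le_1[OF maps_into[OF i x]] prob_pos[OF i x]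
        by (intro mult_left_mono) (auto simp: visit_prob_def)
      then show ?thesis by (cases "i = j") (simp_all add: algebra_simps)
    qed
    then have "hit_prob c n x \<le> (\<Sum>i<N. p i x - (if i = j then p i x * e else 0))"
      unfolding Suc hit_prob_Suc by (intro sum_mono) simp
    also have "\<dots> = 1 - p j x * e"
      using j(1) by (simp add: sum_subtractf prob_sum[OF x])
    finally show ?thesis .
  qed
  then show ?thesis unfolding escapes_def using pe(1) by blast
qed

lemma inaccessible_escapes:
  assumes "y \<in> S" "\<not> accessible N wt p y c"
  shows "escapes c y"
proof -
  have "Fk N wt p k y c = 0" for k
  proof (cases k)
    case (Suc k')
    then have "\<not> Pk N wt p k y c > 0" using assms(2) unfolding accessible_def by auto
    then show ?thesis
      using Fk_le_Pk[OF assms(1), where k = k and y = c] Fk_nonneg[OF assms(1), where k = k and y = c]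
      by linarith
  qed simp
  then show ?thesis unfolding escapes_def hit_prob_def by (intro exI[of _ 1]) simp
qed

text \<open>If the path from \<open>x\<close> to \<open>y\<close> passes through \<open>c\<close>, it is \<open>c\<close> itself that escapes.\<close>
lemma Pk_pos_escapes:
  assumes "y \<in> S" "\<not> accessible N wt p y c"
  shows "x \<in> S \<Longrightarrow> Pk N wt p m x y > 0 \<Longrightarrow> escapes c x \<or> escapes c c"
proof (induction m arbitrary: x)
  case 0
  then show ?case using inaccessible_escapes[OF assms] by (simp split: if_splits)
next
  case (Suc m)
  obtain j where j: "j < N" "Pk N wt p m (wt j x) y > 0"
    using Pk_Suc_pos_obtain[OF Suc.prems] .
  then have "escapes c (wt j x) \<or> escapes c c"
    using Suc.IH maps_into Suc.prems(1) by blast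
  then show ?case
    using escapes_step[OF Suc.prems(1) j(1)] by (cases "wt j x = c") auto
qed

lemma recurrent_not_escapes:
  assumes "recurrent N wt p c"
  shows "\<not> escapes c c"
proof
  assume "escapes c c"
  then obtain e where e: "e > 0" "\<And>n. hit_prob c n c \<le> 1 - e" unfolding escapes_def by blast
  have "(\<lambda>n. hit_prob c n c) \<longlonglongrightarrow> 1"
    using assms summable_LIMSEQ unfolding recurrent_def hit_prob_def by metis
  then have "1 \<le> 1 - e" by (rule LIMSEQ_le_const2) (use e(2) in auto)
  then show False using e(1) by simp
qed

lemma recurrent_accessible_back:
  assumes "c \<in> S" "recurrent N wt p c" "Pk N wt p m c y > 0"
  shows "accessible N wt p y c"
  using Pk_pos_escapes[OF Pk_pos_imp_mem[OF assms(1,3)] _ assms(1,3)] recurrent_not_escapes[OF assms(2)]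
  by blast

lemma recurrent_class_closed:
  assumes C: "comm_class S N wt p C" "\<forall>c\<in>C. recurrent N wt p c"
    and c: "c \<in> C" and i: "i < N"
  shows "wt i c \<in> C"
proof -
  have cS: "c \<in> S" using C(1) c unfolding comm_class_def by blast
  have "accessible N wt p c (wt i c)" using accessible_step[OF cS i] .
  moreover from this obtain m where "Pk N wt p m c (wt i c) > 0" unfolding accessible_def by blast
  then have "accessible N wt p (wt i c) c" using recurrent_accessible_back cS C(2) c by blast
  ultimately show ?thesis
    using C(1) c maps_into[OF i cS] unfolding comm_class_def communicate_def by blast
qed

lemma Pk_pos_contracts:
  fixes E :: "'a \<Rightarrow> real"
  assumes step: "\<And>i x. i < N \<Longrightarrow> x \<in> S \<Longrightarrow> E (wt i x) - B \<le> l * (E x - B)" and l: "0 \<le> l"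
  shows "x \<in> S \<Longrightarrow> Pk N wt p m x y > 0 \<Longrightarrow> E y - B \<le> l ^ m * (E x - B)"
proof (induction m arbitrary: x)
  case (Suc m)
  obtain j where j: "j < N" "Pk N wt p m (wt j x) y > 0"
    using Pk_Suc_pos_obtain[OF Suc.prems] .
  have "E y - B \<le> l ^ m * (E (wt j x) - B)"
    using Suc.IH[OF maps_into[OF j(1) Suc.prems(1)] j(2)] .
  also have "\<dots> \<le> l ^ m * (l * (E x - B))"
    using step[OF j(1) Suc.prems(1)] l by (intro mult_left_mono) auto
  finally show ?case by (simp add: mult.assoc mult.left_commute)
qed (simp split: if_splits)

lemma self_accessible_affine_bound:
  fixes E :: "'a \<Rightarrow> real"
  assumes step: "\<And>i x. i < N \<Longrightarrow> x \<in> S \<Longrightarrow> E (wt i x) \<le> \<theta> + l * E x"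
    and l: "0 \<le> l" "l < 1" and x: "x \<in> S" "accessible N wt p x x"
  shows "E x \<le> \<theta> / (1 - l)"
proof -
  define B where "B = \<theta> / (1 - l)"
  have \<theta>: "\<theta> = (1 - l) * B" using l by (simp add: B_def)
  have "E (wt i y) - B \<le> l * (E y - B)" if "i < N" "y \<in> S" for i y
    using step[OF that] unfolding \<theta> by (simp add: algebra_simps)
  moreover obtain k where k: "k \<ge> 1" "Pk N wt p k x x > 0"
    using x(2) unfolding accessible_def by blast
  ultimately have "E x - B \<le> l ^ k * (E x - B)"
    using Pk_pos_contracts l(1) x(1) by blast
  then have "(1 - l ^ k) * (E x - B) \<le> 0" by (simp add: algebra_simps)
  moreover have "l ^ k < 1" using k(1) l by (simp add: power_less_one_iff)
  ultimately show ?thesis unfolding B_def by (simp add: mult_le_0_iff)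
qed

end

section \<open>Norms on \<open>real^'n\<close> and roundoff\<close>

context
  fixes nrm :: "real^'n \<Rightarrow> real"
  assumes nrm: "is_norm nrm"
begin

lemma is_norm_nonneg: "0 \<le> nrm x"
  using nrm unfolding is_norm_def by blast

lemma is_norm_zero: "nrm 0 = 0"
  using nrm unfolding is_norm_def by blast

lemma is_norm_scaleR: "nrm (c *\<^sub>R x) = \<bar>c\<bar> * nrm x"
  using nrm unfolding is_norm_def by blast

lemma is_norm_triangle: "nrm (x + y) \<le> nrm x + nrm y"
  using nrm unfolding is_norm_def by blast

lemma is_norm_minus_commute: "nrm (x - y) = nrm (y - x)"
  using is_norm_scaleR[of "-1" "y - x"] by simp

lemma is_norm_diff_triangle: "nrm (x - z) \<le> nrm (x - y) + nrm (y - z)"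
  using is_norm_triangle[of "x - y" "y - z"] by simp

lemma is_norm_sum: "nrm (\<Sum>j\<in>I. f j) \<le> (\<Sum>j\<in>I. nrm (f j))"
proof (induction I rule: infinite_finite_induct)
  case (insert j I)
  then show ?case using is_norm_triangle[of "f j" "sum f I"] by simp
qed (simp_all add: is_norm_zero)

lemma is_norm_le_sum_axis: "nrm v \<le> (\<Sum>j\<in>UNIV. \<bar>v $ j\<bar> * nrm (axis j 1))"
proof -
  have "nrm v = nrm (\<Sum>j\<in>UNIV. (v $ j) *\<^sub>R axis j 1)"
    using basis_expansion[of v] by (simp add: scalar_mult_eq_scaleR)
  also have "\<dots> \<le> (\<Sum>j\<in>UNIV. \<bar>v $ j\<bar> * nrm (axis j 1))"
    by (rule order_trans[OF is_norm_sum]) (simp add: is_norm_scaleR)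
  finally show ?thesis .
qed

lemma is_norm_le_norm: "\<exists>K\<ge>0. \<forall>v. nrm v \<le> K * norm v"
proof (intro exI conjI allI)
  show "0 \<le> (\<Sum>j\<in>UNIV. nrm (axis j 1 :: real^'n))" by (intro sum_nonneg is_norm_nonneg)
  fix v :: "real^'n"
  have "nrm v \<le> (\<Sum>j\<in>UNIV. \<bar>v $ j\<bar> * nrm (axis j 1))" by (rule is_norm_le_sum_axis)
  also have "\<dots> \<le> (\<Sum>j\<in>UNIV. norm v * nrm (axis j 1))"
    by (intro sum_mono mult_right_mono component_le_norm_cart is_norm_nonneg)
  finally show "nrm v \<le> (\<Sum>j\<in>UNIV. nrm (axis j 1)) * norm v"
    by (simp add: sum_distrib_left mult.commute)
qed

lemma bdd_above_nrm_diff: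
  assumes "bounded A"
  shows "bdd_above ((\<lambda>a. nrm (a - c)) ` A)"
proof -
  obtain K where K: "K \<ge> 0" "\<And>v. nrm v \<le> K * norm v" using is_norm_le_norm by blast
  obtain R where R: "\<And>a. a \<in> A \<Longrightarrow> norm a \<le> R"
    using assms unfolding bounded_iff by blast
  have "nrm (a - c) \<le> K * (R + norm c)" if "a \<in> A" for a
  proof -
    have "nrm (a - c) \<le> K * norm (a - c)" by (rule K(2))
    also have "\<dots> \<le> K * (R + norm c)"
      using R[OF that] norm_triangle_ineq4[of a c] K(1) by (intro mult_left_mono) auto
    finally show ?thesis .
  qed
  then show ?thesis by (rule bdd_aboveI2)
qed

end

lemma cell0_abs_le: "v \<in> cell0 \<delta> \<Longrightarrow> \<bar>v $ j\<bar> \<le> \<delta> / 2"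
  unfolding cell0_def abs_le_iff by (metis (no_types, lifting) mem_Collect_eq minus_divide_left
    minus_le_iff less_imp_le)

lemma scaleR_mem_cell0:
  assumes v: "v \<in> cell0 \<delta>" and t: "\<bar>t\<bar> < 1"
  shows "t *\<^sub>R v \<in> cell0 \<delta>"
proof -
  have "\<bar>t * v $ j\<bar> < \<delta> / 2" for j
  proof -
    have "0 < \<delta>" using v unfolding cell0_def by fastforce
    have "\<bar>t * v $ j\<bar> \<le> \<bar>t\<bar> * (\<delta> / 2)"
      unfolding abs_mult using cell0_abs_le[OF v] by (intro mult_left_mono) auto
    also have "\<dots> < \<delta> / 2" using t \<open>0 < \<delta>\<close> by simp
    finally show ?thesis .
  qed
  then have "- (\<delta> / 2) \<le> t * v $ j \<and> t * v $ j < \<delta> / 2" for j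
    unfolding abs_less_iff by (metis less_eq_real_def minus_less_iff)
  then show ?thesis by (simp add: cell0_def)
qed

lemma roundoff_in_grid: "roundoff \<delta> x \<in> grid \<delta>"
  unfolding roundoff_def grid_def by (intro CollectI exI[of _ "\<chi> j. \<lfloor>x $ j / \<delta> + 1/2\<rfloor>"]) simp

lemma diff_roundoff_in_cell0:
  assumes "\<delta> > 0"
  shows "x - roundoff \<delta> x \<in> cell0 \<delta>"
  unfolding cell0_def
proof (intro CollectI allI)
  fix j
  define z where "z = x $ j / \<delta> + 1/2"
  have "x $ j + \<delta> / 2 = \<delta> * z" using assms by (simp add: z_def field_simps)
  moreover have "\<delta> * of_int \<lfloor>z\<rfloor> \<le> \<delta> * z" "\<delta> * z < \<delta> * of_int \<lfloor>z\<rfloor> + \<delta>"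
    using assms mult_strict_left_mono[OF real_of_int_floor_add_one_gt[of z] assms]
    by (simp_all add: distrib_left)
  ultimately show "- \<delta> / 2 \<le> (x - roundoff \<delta> x) $ j \<and> (x - roundoff \<delta> x) $ j < \<delta> / 2"
    by (simp add: roundoff_def z_def[symmetric])
qed

context
  fixes nrm :: "real^'n \<Rightarrow> real"
  assumes nrm: "is_norm nrm"
begin

lemma bdd_above_cell0_diam:
  "bdd_above ((\<lambda>q. nrm (fst q - snd q)) ` (cell0 \<delta> \<times> cell0 \<delta>))"
proof (rule bdd_aboveI2)
  fix q :: "(real^'n) \<times> (real^'n)" assume q: "q \<in> cell0 \<delta> \<times> cell0 \<delta>"
  have "\<bar>(fst q - snd q) $ j\<bar> \<le> \<delta>" for j
    using q cell0_abs_le[of "fst q" \<delta> j] cell0_abs_le[of "snd q" \<delta> j] by auto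
  then have "(\<Sum>j\<in>UNIV. \<bar>(fst q - snd q) $ j\<bar> * nrm (axis j 1)) \<le> (\<Sum>j\<in>UNIV. \<delta> * nrm (axis j 1))"
    by (intro sum_mono mult_right_mono is_norm_nonneg[OF nrm])
  then show "nrm (fst q - snd q) \<le> (\<Sum>j\<in>UNIV. \<delta> * nrm (axis j 1 :: real^'n))"
    using is_norm_le_sum_axis[OF nrm] order_trans by blast
qed

text \<open>The cell is only half open, so \<open>v\<close> and \<open>-v\<close> need not both lie in it; the points
  \<open>\<pm>t v\<close> with \<open>t < 1\<close> do, and their difference \<open>2t v\<close> gives \<open>t \<cdot> nrm v \<le> \<theta>\<close>.\<close>
lemma cell0_nrm_le_theta:
  assumes v: "v \<in> cell0 \<delta>"
  shows "nrm v \<le> theta nrm \<delta>"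
proof (rule field_le_mult_one_interval)
  fix t :: real assume t: "0 < t" "t < 1"
  have "(t *\<^sub>R v, (- t) *\<^sub>R v) \<in> cell0 \<delta> \<times> cell0 \<delta>"
    using scaleR_mem_cell0[OF v, of t] scaleR_mem_cell0[OF v, of "- t"] t by simp
  from cSUP_upper[OF this bdd_above_cell0_diam]
  have "nrm (t *\<^sub>R v - (- t) *\<^sub>R v) \<le> (SUP q \<in> cell0 \<delta> \<times> cell0 \<delta>. nrm (fst q - snd q))"
    by simp
  moreover have "t *\<^sub>R v - (- t) *\<^sub>R v = (2 * t) *\<^sub>R v"
    by (simp only: scaleR_left_diff_distrib[symmetric]) simp
  ultimately have "\<bar>2 * t\<bar> * nrm v \<le> (SUP q \<in> cell0 \<delta> \<times> cell0 \<delta>. nrm (fst q - snd q))"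
    by (metis is_norm_scaleR[OF nrm])
  then show "t * nrm v \<le> theta nrm \<delta>"
    using t unfolding theta_def by simp
qed

lemma nrm_roundoff_diff_le:
  assumes "\<delta> > 0"
  shows "nrm (roundoff \<delta> u - v) \<le> theta nrm \<delta> + nrm (u - v)"
  using cell0_nrm_le_theta[OF diff_roundoff_in_cell0[OF assms, of u]]
    is_norm_minus_commute[OF nrm, of u "roundoff \<delta> u"] is_norm_diff_triangle[OF nrm, where x = "roundoff \<delta> u" and y = u and z = v]
  by linarith

end

section \<open>Distance to a set and Hausdorff distance\<close>

definition nrm_infdist :: "(real^'n \<Rightarrow> real) \<Rightarrow> real^'n \<Rightarrow> (real^'n) set \<Rightarrow> real" where
  "nrm_infdist nrm x A = (INF a\<in>A. nrm (x - a))"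

context
  fixes nrm :: "real^'n \<Rightarrow> real"
  assumes nrm: "is_norm nrm"
begin

lemma bdd_below_nrm_diff: "bdd_below ((\<lambda>a. nrm (x - a)) ` A)"
  using is_norm_nonneg[OF nrm] by (intro bdd_belowI2) blast

lemma nrm_infdist_le: "a \<in> A \<Longrightarrow> nrm_infdist nrm x A \<le> nrm (x - a)"
  unfolding nrm_infdist_def by (rule cINF_lower[OF bdd_below_nrm_diff])

lemma ereal_nrm_infdist:
  "A \<noteq> {} \<Longrightarrow> ereal (nrm_infdist nrm x A) = (INF a\<in>A. ereal (nrm (x - a)))"
  unfolding nrm_infdist_def using ereal_Inf'[OF bdd_below_nrm_diff] by (simp add: image_comp)

lemma nrm_infdist_image_le:
  assumes Y: "Y \<noteq> {}" "g ` Y \<subseteq> Y'" and l: "0 \<le> l"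
    and shadow: "\<And>y. y \<in> Y \<Longrightarrow> nrm (x' - g y) \<le> \<theta> + l * nrm (x - y)"
  shows "nrm_infdist nrm x' Y' \<le> \<theta> + l * nrm_infdist nrm x Y"
proof -
  have "continuous (at_right t) (\<lambda>t. \<theta> + l * t)" for t
    by (intro continuous_intros)
  then have "\<theta> + l * nrm_infdist nrm x Y = (INF y\<in>Y. \<theta> + l * nrm (x - y))"
    unfolding nrm_infdist_def using Y(1) l
    by (subst continuous_at_Inf_mono[where f = "\<lambda>t. \<theta> + l * t"])
      (auto intro!: bdd_below_nrm_diff monoI mult_left_mono simp: image_comp)
  moreover have "nrm_infdist nrm x' Y' \<le> \<theta> + l * nrm (x - y)" if "y \<in> Y" for y
    using nrm_infdist_le[of "g y" Y' x'] Y(2) shadow[OF that] that by fastforce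
  ultimately show ?thesis using Y(1) by (simp add: cINF_greatest)
qed

lemma hausdorff_d_le:
  assumes "A \<noteq> {}" "B \<noteq> {}"
    and "\<And>a. a \<in> A \<Longrightarrow> nrm_infdist nrm a B \<le> r" "\<And>b. b \<in> B \<Longrightarrow> nrm_infdist nrm b A \<le> r"
  shows "hausdorff_d nrm A B \<le> ereal r"
proof -
  have "(INF b\<in>B. ereal (nrm (a - b))) \<le> ereal r" if "a \<in> A" for a
    using ereal_nrm_infdist[OF assms(2), of a] assms(3)[OF that] by (metis ereal_less_eq(3))
  moreover have "(INF a\<in>A. ereal (nrm (a - b))) \<le> ereal r" if "b \<in> B" for b
  proof -
    have "(INF a\<in>A. ereal (nrm (a - b))) = (INF a\<in>A. ereal (nrm (b - a)))"
      by (intro INF_cong refl arg_cong[where f = ereal] is_norm_minus_commute[OF nrm])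
    then show ?thesis
      using ereal_nrm_infdist[OF assms(1), of b] assms(4)[OF that] by (metis ereal_less_eq(3))
  qed
  ultimately show ?thesis unfolding hausdorff_d_def by (simp add: SUP_least)
qed

end

lemma bdd_above_affine_bound:
  fixes E :: "'a \<Rightarrow> real"
  assumes bdd: "bdd_above (E ` A)" and l: "0 \<le> l" "l < 1"
    and rec: "\<And>a. a \<in> A \<Longrightarrow> \<exists>b\<in>A. E a \<le> \<theta> + l * E b" and a: "a \<in> A"
  shows "E a \<le> \<theta> / (1 - l)"
proof -
  define M where "M = (SUP a\<in>A. E a)"
  have le_M: "E b \<le> M" if "b \<in> A" for b
    unfolding M_def using bdd that by (rule cSUP_upper2) simp
  have "E b \<le> \<theta> + l * M" if b: "b \<in> A" for b
  proof -
    obtain b' where "b' \<in> A" "E b \<le> \<theta> + l * E b'" using rec[OF b] by blast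
    moreover have "l * E b' \<le> l * M" using le_M[OF \<open>b' \<in> A\<close>] l(1) by (rule mult_left_mono)
    ultimately show ?thesis by linarith
  qed
  then have "M \<le> \<theta> + l * M" unfolding M_def using a by (intro cSUP_least) auto
  then have "M \<le> \<theta> / (1 - l)" using l by (simp add: field_simps)
  then show ?thesis using le_M[OF a] by linarith
qed

section \<open>Chains shadowing a contractive iterated function system\<close>

locale shadowing_chain = random_map_chain S N wt p
  for S :: "(real^'n) set" and N wt p +
  fixes nrm :: "real^'n \<Rightarrow> real" and w :: "nat \<Rightarrow> real^'n \<Rightarrow> real^'n"
    and \<theta> l :: real and A :: "(real^'n) set"
  assumes nrm: "is_norm nrm"
    and l: "0 \<le> l" "l < 1"
    and shadow: "\<And>i x y. i < N \<Longrightarrow> nrm (wt i x - w i y) \<le> \<theta> + l * nrm (x - y)"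
    and attractor: "A \<noteq> {}" "bounded A" "A = (\<Union>i<N. w i ` A)"
begin

lemma self_accessible_near_attractor:
  assumes "x \<in> S" "accessible N wt p x x"
  shows "nrm_infdist nrm x A \<le> \<theta> / (1 - l)"
proof (rule self_accessible_affine_bound[OF _ l assms])
  fix i y assume "i < N"
  then show "nrm_infdist nrm (wt i y) A \<le> \<theta> + l * nrm_infdist nrm y A"
    using attractor shadow l by (intro nrm_infdist_image_le[OF nrm, where g = "w i"]) auto
qed

lemma attractor_near_recurrent_class:
  assumes C: "comm_class S N wt p C" "\<forall>c\<in>C. recurrent N wt p c" and a: "a \<in> A"
  shows "nrm_infdist nrm a C \<le> \<theta> / (1 - l)"
proof (rule bdd_above_affine_bound[OF _ l _ a])
  obtain c where c: "c \<in> C" using C(1) unfolding comm_class_def by blast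
  show "bdd_above ((\<lambda>a. nrm_infdist nrm a C) ` A)"
    using bdd_above_nrm_diff[OF nrm attractor(2), of c] nrm_infdist_le[OF nrm c]
    by (auto simp: bdd_above_def intro: order_trans)
  fix b assume "b \<in> A"
  then obtain i b' where ib: "i < N" "b' \<in> A" "b = w i b'" using attractor(3) by blast
  have "nrm_infdist nrm (w i b') C \<le> \<theta> + l * nrm_infdist nrm b' C"
    using C l shadow[OF ib(1)] recurrent_class_closed[OF C _ ib(1)] c
    by (intro nrm_infdist_image_le[OF nrm, where g = "wt i"])
       (auto simp: is_norm_minus_commute[OF nrm])
  then show "\<exists>b'\<in>A. nrm_infdist nrm b C \<le> \<theta> + l * nrm_infdist nrm b' C"
    using ib by blast
qed

lemma hausdorff_recurrent_class_attractor:
  assumes C: "comm_class S N wt p C" "\<forall>c\<in>C. recurrent N wt p c"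
  shows "hausdorff_d nrm C A \<le> ereal (\<theta> / (1 - l))"
proof (rule hausdorff_d_le[OF nrm])
  show "C \<noteq> {}" "A \<noteq> {}" using C(1) attractor(1) unfolding comm_class_def by blast+
  show "nrm_infdist nrm c A \<le> \<theta> / (1 - l)" if "c \<in> C" for c
    using self_accessible_near_attractor C(1) that unfolding comm_class_def communicate_def by blast
  show "nrm_infdist nrm a C \<le> \<theta> / (1 - l)" if "a \<in> A" for a
    using attractor_near_recurrent_class[OF C that] .
qed

end

theorem theorem14:
  fixes nrm :: "real^'n \<Rightarrow> real" and \<delta> :: real and N :: nat
    and w :: "nat \<Rightarrow> real^'n \<Rightarrow> real^'n" and lam :: "nat \<Rightarrow> real"
    and q :: "nat \<Rightarrow> real" and p :: "nat \<Rightarrow> real^'n \<Rightarrow> real"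
    and A :: "(real^'n) set" and C :: "(real^'n) set"
  assumes delta_pos: "\<delta> > 0"
    and norm: "is_norm nrm"
    and N_pos: "N \<ge> 1"
    and lam: "\<And>i. i < N \<Longrightarrow> 0 \<le> lam i \<and> lam i < 1"
    and contr: "\<And>i x y. i < N \<Longrightarrow> nrm (w i x - w i y) \<le> lam i * nrm (x - y)"
    and q: "\<And>i. i < N \<Longrightarrow> 0 < q i \<and> q i \<le> 1" "(\<Sum>i<N. q i) = 1"
    and attractor: "A \<noteq> {}" "compact A" "A = (\<Union>i<N. w i ` A)"
    and p: "\<And>i x. i < N \<Longrightarrow> x \<in> grid \<delta> \<Longrightarrow> 0 < p i x \<and> p i x \<le> 1"
           "\<And>x. x \<in> grid \<delta> \<Longrightarrow> (\<Sum>i<N. p i x) = 1"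
    and C: "pos_rec_class (grid \<delta>) N (\<lambda>i x. roundoff \<delta> (w i x)) p C"
  shows "hausdorff_d nrm C A \<le> ereal (theta nrm \<delta> / (1 - Max (lam ` {..<N})))"
proof -
  define l where "l = Max (lam ` {..<N})"
  have fin: "finite (lam ` {..<N})" "lam ` {..<N} \<noteq> {}"
    using N_pos by (auto simp: lessThan_empty_iff)
  have "l \<in> lam ` {..<N}" and lam_le: "\<And>i. i < N \<Longrightarrow> lam i \<le> l"
    unfolding l_def using fin by (auto intro: Max_in Max_ge)
  then have l: "0 \<le> l" "l < 1" using lam by auto
  interpret shadowing_chain "grid \<delta>" N "\<lambda>i x. roundoff \<delta> (w i x)" p nrm w "theta nrm \<delta>" l A
  proof unfold_locales
    show "A = (\<Union>i<N. w i ` A)" by (rule attractor(3))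
  next
    fix i x y assume i: "i < N"
    show "nrm (roundoff \<delta> (w i x) - w i y) \<le> theta nrm \<delta> + l * nrm (x - y)"
      using nrm_roundoff_diff_le[OF norm delta_pos, of "w i x" "w i y"] contr[OF i, of x y]
        mult_right_mono[OF lam_le[OF i] is_norm_nonneg[OF norm, of "x - y"]] by linarith
  qed (use p attractor(1) l norm compact_imp_bounded[OF attractor(2)] in \<open>auto simp: roundoff_in_grid\<close>)
  show ?thesis
    using hausdorff_recurrent_class_attractor C
    unfolding l_def pos_rec_class_def pos_recurrent_def by blast
qed

end
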